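(* Let $[a,b]$ be a bounded closed interval and let $A:L^2(a,b)\to L^2(a,b)$ be the integral operator $(Af)(x)=\int_a^b K(x,y)f(y)\,dy$ with a real, symmetric ($K(x,y)=K(y,x)$), square-integrable kernel $K$. Assume $A$ is injective, let $\{\psi_k\}_{k\ge1}$ be an orthonormal basis of $L^2(a,b)$ of eigenfunctions of $A$ with eigenvalues $\lambda_1>\lambda_2>\lambda_3>\cdots$, $\lambda_k\to0$. Let $\xi$ be a zero-mean Gaussian weak random variable in $L^2(a,b)$ with covariance operator $R_{\xi\xi}$, and for each $\epsilon>0$ let $\zeta=\zeta^{(\epsilon)}$ be a zero-mean Gaussian weak random variable uncorrelated with $\xi$ ($R_{\xi\zeta}=0$) and with covariance operator $R_{\zeta\zeta}=\epsilon^2N$, where $N$ is a fixed positive operator (independent of $\epsilon$) such that $R_{\zeta\zeta}^{-1}$ exists. Put $\eta=A\xi+\zeta$, $\rho_k^2=(R_{\xi\xi}\psi_k,\psi_k)$, $\nu_k^2=(N\psi_k,\psi_k)>0$ (no assumption is made that the components $(\xi,\psi_k)$, or $(\zeta,\psi_k)$, are mutually uncorrelated), and $$\mathcal I_\epsilon=\{k:\lambda_k\rho_k\ge\epsilon\nu_k\},\qquad \widehat B_\epsilon g=\sum_{k\in\mathcal I_\epsilon}\frac{(g,\psi_k)}{\lambda_k}\psi_k .$$ If $R_{\xi\xi}$ is of trace class and the set $\mathcal I_\epsilon$ is finite for every $\epsilon>0$, then $$\lim_{\epsilon\to0}\mathrm{E}\left\{\|\xi-\widehat B_\epsilon\eta\|^2\right\}=0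 .$$
   Context: A (Gaussian) weak random variable in the Hilbert space $L^2(a,b)$ is a linear map $v\mapsto(\xi,v)$ assigning to each $v\in L^2(a,b)$ a real (jointly Gaussian) random variable; it is determined by its mean element and its covariance operator $R_{\xi\xi}$, defined by $(R_{\xi\xi}u,v)=\mathrm{E}\{(\xi,u)(\xi,v)\}$ (zero mean case); $R_{\xi\zeta}$ is defined analogously with $\mathrm{E}\{(\xi,u)(\zeta,v)\}$. $(\cdot,\cdot)$ and $\|\cdot\|$ denote the inner product and norm of $L^2(a,b)$, and $\mathrm{E}$ denotes expectation. *)

theory Defs
  imports "HOL-Probability.Probability"
begin

text \<open>Elements of L2(a,b) are represented by real functions on the reals whose
restriction to [a,b] is Borel measurable and square integrable; all statements
about them are made up to equality almost everywhere on [a,b].\<close>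

definition L2 :: "real \<Rightarrow> real \<Rightarrow> (real \<Rightarrow> real) set" where
  "L2 a b = {f. f \<in> borel_measurable lborel \<and> set_integrable lborel {a..b} (\<lambda>x. (f x)\<^sup>2)}"

definition l2ip :: "real \<Rightarrow> real \<Rightarrow> (real \<Rightarrow> real) \<Rightarrow> (real \<Rightarrow> real) \<Rightarrow> real" where
  "l2ip a b f g = set_lebesgue_integral lborel {a..b} (\<lambda>x. f x * g x)"

definition ae_eq_on :: "real \<Rightarrow> real \<Rightarrow> (real \<Rightarrow> real) \<Rightarrow> (real \<Rightarrow> real) \<Rightarrow> bool" where
  "ae_eq_on a b f g \<longleftrightarrow> (AE x in lborel. x \<in> {a..b} \<longrightarrow> f x = g x)"

definition kernel_op :: "(real \<Rightarrow> real \<Rightarrow> real) \<Rightarrow> real \<Rightarrow> real \<Rightarrow> (real \<Rightarrow> real) \<Rightarrow> real \<Rightarrow> real" where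
  "kernel_op K a b f x = set_lebesgue_integral lborel {a..b} (\<lambda>y. K x y * f y)"

definition centered_gaussian :: "'a measure \<Rightarrow> ('a \<Rightarrow> real) \<Rightarrow> bool" where
  "centered_gaussian M X \<longleftrightarrow> X \<in> borel_measurable M \<and>
     ((AE \<omega> in M. X \<omega> = 0) \<or> (\<exists>\<sigma>>0. distributed M lborel X (normal_density 0 \<sigma>)))"

text \<open>A zero-mean Gaussian weak random variable in L2(a,b): a linear map
 v \<mapsto> (X,v) from L2(a,b) to random variables (equal a.s.), whose values
 are jointly Gaussian (by linearity: every value is centered Gaussian).\<close>
definition gaussian_weak_rv :: "'a measure \<Rightarrow> real \<Rightarrow> real \<Rightarrow> ((real \<Rightarrow> real) \<Rightarrow> 'a \<Rightarrow> real) \<Rightarrow> bool" where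
  "gaussian_weak_rv M a b X \<longleftrightarrow>
     (\<forall>v\<in>L2 a b. centered_gaussian M (X v)) \<and>
     (\<forall>u\<in>L2 a b. \<forall>v\<in>L2 a b. \<forall>c d::real.
        AE \<omega> in M. X (\<lambda>x. c * u x + d * v x) \<omega> = c * X u \<omega> + d * X v \<omega>)"

text \<open>E ||X||^2 for a weak random variable X, computed in the orthonormal basis psi:
 the trace of its covariance operator, sum_k E (X,psi_k)^2 (in [0,\<infinity>]).\<close>
definition mean_sq_norm :: "'a measure \<Rightarrow> (nat \<Rightarrow> real \<Rightarrow> real) \<Rightarrow> ((real \<Rightarrow> real) \<Rightarrow> 'a \<Rightarrow> real) \<Rightarrow> ennreal" where
  "mean_sq_norm M \<psi> X = (\<Sum>k. \<integral>\<^sup>+ \<omega>. ennreal ((X (\<psi> k) \<omega>)\<^sup>2) \<partial>M)"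

end

theory Submission
  imports Defs
begin

text \<open>In the eigenbasis the \<open>j\<close>-th component of \<open>\<xi> - B\<^sub>\<epsilon> \<eta>\<close> is, almost surely, \<open>-(\<zeta>,\<psi>\<^sub>j)/\<lambda>\<^sub>j\<close>
if \<open>j \<in> I\<^sub>\<epsilon>\<close> (because \<open>(\<xi>, A\<psi>\<^sub>j) = \<lambda>\<^sub>j (\<xi>,\<psi>\<^sub>j)\<close>) and \<open>(\<xi>,\<psi>\<^sub>j)\<close> otherwise, so its second
moment is \<open>\<epsilon>\<^sup>2\<nu>\<^sub>j\<^sup>2/\<lambda>\<^sub>j\<^sup>2\<close> or \<open>\<rho>\<^sub>j\<^sup>2\<close>. The cut-off rule defining \<open>I\<^sub>\<epsilon>\<close> picks exactly the smaller of
the two, so the second moment is \<open>min (\<epsilon>\<^sup>2\<nu>\<^sub>j\<^sup>2/\<lambda>\<^sub>j\<^sup>2) \<rho>\<^sub>j\<^sup>2\<close>: it is dominated by \<open>\<rho>\<^sub>j\<^sup>2\<close> and tends to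
\<open>0\<close> with \<open>\<epsilon>\<close>. As \<open>R\<^sub>\<xi>\<^sub>\<xi>\<close> is of trace class, \<open>\<Sum>\<^sub>j \<rho>\<^sub>j\<^sup>2 < \<infinity>\<close>, and dominated convergence for series
(Tannery's theorem) gives the limit.\<close>

lemma centered_gaussian_square_integrable:
  assumes "centered_gaussian M X"
  shows "integrable M (\<lambda>\<omega>. (X \<omega>)\<^sup>2)"
proof -
  have [measurable]: "X \<in> borel_measurable M"
    using assms unfolding centered_gaussian_def by blast
  from assms consider "AE \<omega> in M. X \<omega> = 0"
    | \<sigma> where "\<sigma> > 0" "distributed M lborel X (normal_density 0 \<sigma>)"
    unfolding centered_gaussian_def by blast
  then show ?thesis
  proof cases
    case 1
    then have "integrable M (\<lambda>\<omega>. (X \<omega>)\<^sup>2) = integrable M (\<lambda>\<omega>. 0::real)"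
      by (intro integrable_cong_AE) (auto elim: eventually_mono)
    then show ?thesis by simp
  next
    case 2
    have "integrable lborel (\<lambda>x. normal_density 0 \<sigma> x * (x - 0)^2)"
      using 2(1) by (rule integrable_normal_moment)
    then show ?thesis
      using distributed_integrable[OF 2(2), of "\<lambda>x. x^2"] by simp
  qed
qed

lemma L2_measurable: "f \<in> L2 a b \<Longrightarrow> f \<in> borel_measurable lborel"
  unfolding L2_def by blast

lemma L2_zero: "(\<lambda>x. 0) \<in> L2 a b"
  unfolding L2_def set_integrable_def by simp

lemma L2_cmult:
  assumes "f \<in> L2 a b"
  shows "(\<lambda>x. c * f x) \<in> L2 a b"
proof -
  have "set_integrable lborel {a..b} (\<lambda>x. c\<^sup>2 * (f x)\<^sup>2)"
    using assms unfolding L2_def by (intro set_integrable_mult_right) blast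
  moreover have "(\<lambda>x. c * f x) \<in> borel_measurable lborel"
    using L2_measurable[OF assms] by measurable
  ultimately show ?thesis
    unfolding L2_def by (simp add: power_mult_distrib)
qed

lemma L2_ae_eq_on:
  assumes f[measurable]: "f \<in> borel_measurable lborel"
    and fg: "ae_eq_on a b f g" and g: "g \<in> L2 a b"
  shows "f \<in> L2 a b"
proof -
  have [measurable]: "g \<in> borel_measurable lborel"
    using g by (rule L2_measurable)
  have "integrable lborel (\<lambda>x. indicator {a..b} x *\<^sub>R (f x)\<^sup>2) =
        integrable lborel (\<lambda>x. indicator {a..b} x *\<^sub>R (g x)\<^sup>2)"
    using fg by (intro integrable_cong_AE) (auto simp: ae_eq_on_def indicator_def elim!: eventually_mono)
  then show ?thesis
    using g unfolding L2_def set_integrable_def by simp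
qed

lemma kernel_op_measurable:
  assumes K: "(\<lambda>(x, y). K x y) \<in> borel_measurable lborel"
    and [measurable]: "f \<in> borel_measurable lborel"
  shows "kernel_op K a b f \<in> borel_measurable lborel"
proof -
  have [measurable]: "(\<lambda>(x, y). K x y) \<in> borel_measurable (lborel \<Otimes>\<^sub>M lborel)"
    using K by (simp add: lborel_prod)
  show ?thesis
    unfolding kernel_op_def set_lebesgue_integral_def by measurable
qed

lemma gaussian_weak_rv_square_integrable:
  assumes "gaussian_weak_rv M a b X" "v \<in> L2 a b"
  shows "integrable M (\<lambda>\<omega>. (X v \<omega>)\<^sup>2)"
  using assms unfolding gaussian_weak_rv_def by (blast intro: centered_gaussian_square_integrable)

lemma gaussian_weak_rv_cmult:
  assumes "gaussian_weak_rv M a b X" "v \<in> L2 a b"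
  shows "AE \<omega> in M. X (\<lambda>x. c * v x) \<omega> = c * X v \<omega>"
proof -
  have "AE \<omega> in M. X (\<lambda>x. c * v x + 0 * v x) \<omega> = c * X v \<omega> + 0 * X v \<omega>"
    using assms unfolding gaussian_weak_rv_def by blast
  then show ?thesis by simp
qed

lemma gaussian_weak_rv_ae_eq_on:
  assumes X: "gaussian_weak_rv M a b X"
    and cov: "\<And>u v. u \<in> L2 a b \<Longrightarrow> v \<in> L2 a b \<Longrightarrow>
                l2ip a b (R u) v = integral\<^sup>L M (\<lambda>\<omega>. X u \<omega> * X v \<omega>)"
    and u: "u \<in> L2 a b" and v: "v \<in> L2 a b" and uv: "ae_eq_on a b u v"
  shows "AE \<omega> in M. X u \<omega> = X v \<omega>"
proof -
  define w where "w = (\<lambda>x. 1 * u x + (- 1) * v x)"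
  have w0: "ae_eq_on a b w (\<lambda>x. 0)"
    using uv unfolding ae_eq_on_def w_def by (auto elim!: eventually_mono)
  have [measurable]: "u \<in> borel_measurable lborel" "v \<in> borel_measurable lborel"
    using u v by (blast intro: L2_measurable)+
  have w: "w \<in> L2 a b"
    by (rule L2_ae_eq_on[OF _ w0 L2_zero]) (unfold w_def, measurable)
  have "l2ip a b (R w) w = 0"
    unfolding l2ip_def set_lebesgue_integral_def using w0
    by (intro integral_eq_zero_AE) (auto simp: ae_eq_on_def indicator_def elim!: eventually_mono)
  then have "integral\<^sup>L M (\<lambda>\<omega>. (X w \<omega>)\<^sup>2) = 0"
    using cov[OF w w] by (simp add: power2_eq_square)
  moreover have "integrable M (\<lambda>\<omega>. (X w \<omega>)\<^sup>2)"
    using X w by (rule gaussian_weak_rv_square_integrable)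
  ultimately have "AE \<omega> in M. X w \<omega> = 0"
    by (simp add: integral_nonneg_eq_0_iff_AE)
  moreover have "AE \<omega> in M. X w \<omega> = 1 * X u \<omega> + (- 1) * X v \<omega>"
    using X u v unfolding gaussian_weak_rv_def w_def by blast
  ultimately show ?thesis by eventually_elim simp
qed

lemma gaussian_weak_rv_ae_eq_on_cmult:
  assumes X: "gaussian_weak_rv M a b X"
    and cov: "\<And>u v. u \<in> L2 a b \<Longrightarrow> v \<in> L2 a b \<Longrightarrow>
                l2ip a b (R u) v = integral\<^sup>L M (\<lambda>\<omega>. X u \<omega> * X v \<omega>)"
    and f: "f \<in> borel_measurable lborel" and v: "v \<in> L2 a b" and fv: "ae_eq_on a b f (\<lambda>x. c * v x)"
  shows "AE \<omega> in M. X f \<omega> = c * X v \<omega>"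
proof -
  have "f \<in> L2 a b"
    using f fv L2_cmult[OF v] by (rule L2_ae_eq_on)
  then have "AE \<omega> in M. X f \<omega> = X (\<lambda>x. c * v x) \<omega>"
    using gaussian_weak_rv_ae_eq_on[OF X _ _ L2_cmult[OF v] fv] cov by blast
  with gaussian_weak_rv_cmult[OF X v, of c] show ?thesis
    by eventually_elim simp
qed

lemma strict_decreasing_tendsto_zero_pos:
  fixes f :: "nat \<Rightarrow> real"
  assumes "\<And>k. f (Suc k) < f k" and "f \<longlonglongrightarrow> 0"
  shows "0 < f k"
proof -
  have "decseq f" using assms(1) by (intro decseq_SucI less_imp_le)
  then have "0 \<le> f (Suc k)" using assms(2) by (rule decseq_ge)
  then show ?thesis using assms(1)[of k] by simp
qed

lemma sum_orthonormal_coeff: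
  assumes "\<And>i j. ip (e i) (e j) = (if i = j then 1 else 0)" and "finite S"
  shows "(\<Sum>k\<in>S. c k * ip (e k) (e j) / d k) = (if j \<in> S then c j / d j else (0::real))"
  using assms by (simp add: if_distrib[of "\<lambda>x. _ * x / _"] cong: if_cong)

text \<open>\<open>Y\<close>, \<open>X\<close>, \<open>Z\<close> stand for \<open>(\<xi>,\<psi>\<^sub>j)\<close>, \<open>(\<xi>,A\<psi>\<^sub>j)\<close>, \<open>(\<zeta>,\<psi>\<^sub>j)\<close>, and \<open>l\<close>, \<open>\<rho>\<close>, \<open>\<nu>\<close> for
\<open>\<lambda>\<^sub>j\<close>, \<open>\<rho>\<^sub>j\<^sup>2\<close>, \<open>\<nu>\<^sub>j\<^sup>2\<close>.\<close>

lemma nn_integral_sq_cutoff_error: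
  fixes X Y Z :: "'a \<Rightarrow> real"
  assumes Y: "integrable M (\<lambda>\<omega>. (Y \<omega>)\<^sup>2)" and Z: "integrable M (\<lambda>\<omega>. (Z \<omega>)\<^sup>2)"
    and XY: "AE \<omega> in M. X \<omega> = l * Y \<omega>" and l: "0 < l"
    and \<rho>: "integral\<^sup>L M (\<lambda>\<omega>. Y \<omega> * Y \<omega>) = \<rho>" and \<nu>: "integral\<^sup>L M (\<lambda>\<omega>. Z \<omega> * Z \<omega>) = \<epsilon>\<^sup>2 * \<nu>"
    and "0 \<le> \<nu>" "0 \<le> \<epsilon>"
  shows "(\<integral>\<^sup>+\<omega>. ennreal ((Y \<omega> - (if \<epsilon> * sqrt \<nu> \<le> l * sqrt \<rho> then (X \<omega> + Z \<omega>) / l else 0))\<^sup>2) \<partial>M)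
       = ennreal (min (\<epsilon>\<^sup>2 * (\<nu> / l\<^sup>2)) \<rho>)"
proof -
  have "0 \<le> \<rho>"
    unfolding \<rho>[symmetric] by (intro integral_nonneg_AE) simp
  then have "\<epsilon> * sqrt \<nu> \<le> l * sqrt \<rho> \<longleftrightarrow> (\<epsilon> * sqrt \<nu>)\<^sup>2 \<le> (l * sqrt \<rho>)\<^sup>2"
    using assms by (subst power2_le_iff_abs_le) auto
  also have "\<dots> \<longleftrightarrow> \<epsilon>\<^sup>2 * (\<nu> / l\<^sup>2) \<le> \<rho>"
    using assms \<open>0 \<le> \<rho>\<close> by (simp add: power_mult_distrib field_simps)
  finally have cutoff: "\<epsilon> * sqrt \<nu> \<le> l * sqrt \<rho> \<longleftrightarrow> \<epsilon>\<^sup>2 * (\<nu> / l\<^sup>2) \<le> \<rho>" .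
  show ?thesis
  proof (cases "\<epsilon>\<^sup>2 * (\<nu> / l\<^sup>2) \<le> \<rho>")
    case True
    have "AE \<omega> in M. Y \<omega> - (X \<omega> + Z \<omega>) / l = - (Z \<omega> / l)"
      using XY by eventually_elim (use l in \<open>simp add: field_simps\<close>)
    then have "(\<integral>\<^sup>+\<omega>. ennreal ((Y \<omega> - (X \<omega> + Z \<omega>) / l)\<^sup>2) \<partial>M)
        = (\<integral>\<^sup>+\<omega>. ennreal ((Z \<omega>)\<^sup>2 / l\<^sup>2) \<partial>M)"
      by (intro nn_integral_cong_AE) (auto simp: power_divide elim!: eventually_mono)
    also have "\<dots> = ennreal (integral\<^sup>L M (\<lambda>\<omega>. (Z \<omega>)\<^sup>2 / l\<^sup>2))"
      using Z by (intro nn_integral_eq_integral) auto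
    also have "\<dots> = ennreal (\<epsilon>\<^sup>2 * (\<nu> / l\<^sup>2))"
      using \<nu> by (simp add: power2_eq_square)
    finally show ?thesis
      using True cutoff by simp
  next
    case False
    have "(\<integral>\<^sup>+\<omega>. ennreal ((Y \<omega>)\<^sup>2) \<partial>M) = ennreal \<rho>"
      using Y \<rho> by (simp add: nn_integral_eq_integral power2_eq_square)
    then show ?thesis
      using False cutoff by simp
  qed
qed

lemma tendsto_suminf_ennreal_dominated:
  fixes f :: "'b \<Rightarrow> nat \<Rightarrow> real"
  assumes "F \<noteq> bot" and lim: "\<And>j. ((\<lambda>x. f x j) \<longlongrightarrow> 0) F"
    and bound: "eventually (\<lambda>x. \<forall>j. 0 \<le> f x j \<and> f x j \<le> g j) F" and g: "summable g"
  shows "((\<lambda>x. \<Sum>j. ennreal (f x j)) \<longlongrightarrow> 0) F"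
proof -
  have "eventually (\<lambda>(j::nat, x). \<forall>i. 0 \<le> f x i \<and> f x i \<le> g i) (at_top \<times>\<^sub>F F)"
    using bound by (subst eventually_prod2) simp_all
  then have "eventually (\<lambda>(j, x). norm (f x j) \<le> g j) (at_top \<times>\<^sub>F F)"
    by (rule eventually_mono) auto
  from tannerys_theorem[OF lim this g \<open>F \<noteq> bot\<close>]
  have "((\<lambda>x. \<Sum>j. f x j) \<longlongrightarrow> (\<Sum>j. 0)) F"
    by blast
  then have "((\<lambda>x. ennreal (\<Sum>j. f x j)) \<longlongrightarrow> ennreal 0) F"
    by (intro tendsto_ennrealI) simp
  moreover have "eventually (\<lambda>x. ennreal (\<Sum>j. f x j) = (\<Sum>j. ennreal (f x j))) F"
    using bound
  proof eventually_elim
    case (elim x)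
    then have "summable (f x)"
      by (intro summable_comparison_test[OF _ g]) auto
    then show ?case
      using elim by (simp add: suminf_ennreal2)
  qed
  ultimately show ?thesis by (simp add: tendsto_cong)
qed

lemma tendsto_suminf_ennreal_min_sq:
  fixes c \<rho> :: "nat \<Rightarrow> real"
  assumes c: "\<And>j. 0 \<le> c j" and \<rho>: "\<And>j. 0 \<le> \<rho> j" and "summable \<rho>"
  shows "((\<lambda>\<epsilon>. \<Sum>j. ennreal (min (\<epsilon>\<^sup>2 * c j) (\<rho> j))) \<longlongrightarrow> 0) (at_right 0)"
proof (rule tendsto_suminf_ennreal_dominated[OF _ _ _ \<open>summable \<rho>\<close>])
  show "((\<lambda>\<epsilon>. min (\<epsilon>\<^sup>2 * c j) (\<rho> j)) \<longlongrightarrow> 0) (at_right 0)" for j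
  proof -
    have "((\<lambda>\<epsilon>. min (\<epsilon>\<^sup>2 * c j) (\<rho> j)) \<longlongrightarrow> min (0\<^sup>2 * c j) (\<rho> j)) (at_right 0)"
      by (intro tendsto_intros)
    then show ?thesis
      using \<rho>[of j] by simp
  qed
  show "eventually (\<lambda>\<epsilon>. \<forall>j. 0 \<le> min (\<epsilon>\<^sup>2 * c j) (\<rho> j) \<and> min (\<epsilon>\<^sup>2 * c j) (\<rho> j) \<le> \<rho> j) (at_right 0)"
    using c \<rho> by simp
qed simp

theorem theorem2:
  fixes a b :: real
    and K :: "real \<Rightarrow> real \<Rightarrow> real"
    and \<psi> :: "nat \<Rightarrow> real \<Rightarrow> real"
    and lam :: "nat \<Rightarrow> real"
    and M :: "'a measure"
    and \<xi> :: "(real \<Rightarrow> real) \<Rightarrow> 'a \<Rightarrow> real"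
    and \<zeta> :: "real \<Rightarrow> (real \<Rightarrow> real) \<Rightarrow> 'a \<Rightarrow> real"
    and R N :: "(real \<Rightarrow> real) \<Rightarrow> (real \<Rightarrow> real)"
  assumes ab: "a < b"
    and K_meas: "(\<lambda>(x, y). K x y) \<in> borel_measurable lborel"
    and K_sq: "set_integrable lborel ({a..b} \<times> {a..b}) (\<lambda>(x, y). (K x y)\<^sup>2)"
    and K_sym: "\<And>x y. K x y = K y x"
    and A_inj: "\<And>f. f \<in> L2 a b \<Longrightarrow> ae_eq_on a b (kernel_op K a b f) (\<lambda>x. 0)
                  \<Longrightarrow> ae_eq_on a b f (\<lambda>x. 0)"
    and psi_L2: "\<And>k. \<psi> k \<in> L2 a b"
    and psi_orth: "\<And>i j. l2ip a b (\<psi> i) (\<psi> j) = (if i = j then 1 else 0)"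
    and psi_total: "\<And>f. f \<in> L2 a b \<Longrightarrow> (\<forall>k. l2ip a b f (\<psi> k) = 0) \<Longrightarrow> ae_eq_on a b f (\<lambda>x. 0)"
    and psi_eigen: "\<And>k. ae_eq_on a b (kernel_op K a b (\<psi> k)) (\<lambda>x. lam k * \<psi> k x)"
    and lam_decr: "\<And>k. lam (Suc k) < lam k"
    and lam_lim: "lam \<longlonglongrightarrow> 0"
    and M_prob: "prob_space M"
    and xi_gauss: "gaussian_weak_rv M a b \<xi>"
    and R_L2: "\<And>u. u \<in> L2 a b \<Longrightarrow> R u \<in> L2 a b"
    and R_cov: "\<And>u v. u \<in> L2 a b \<Longrightarrow> v \<in> L2 a b \<Longrightarrow>
                  l2ip a b (R u) v = integral\<^sup>L M (\<lambda>\<omega>. \<xi> u \<omega> * \<xi> v \<omega>)"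
    and N_L2: "\<And>u. u \<in> L2 a b \<Longrightarrow> N u \<in> L2 a b"
    and N_linear: "\<And>u v c d. u \<in> L2 a b \<Longrightarrow> v \<in> L2 a b \<Longrightarrow>
                  ae_eq_on a b (N (\<lambda>x. c * u x + d * v x)) (\<lambda>x. c * N u x + d * N v x)"
    and N_bounded: "\<exists>C. \<forall>u\<in>L2 a b. l2ip a b (N u) (N u) \<le> C * l2ip a b u u"
    and N_pos: "\<And>u. u \<in> L2 a b \<Longrightarrow> l2ip a b (N u) u \<ge> 0"
    and N_inj: "\<And>u. u \<in> L2 a b \<Longrightarrow> ae_eq_on a b (N u) (\<lambda>x. 0) \<Longrightarrow> ae_eq_on a b u (\<lambda>x. 0)"
    and nu_pos: "\<And>k. l2ip a b (N (\<psi> k)) (\<psi> k) > 0"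
    and zeta_gauss: "\<And>\<epsilon>. \<epsilon> > 0 \<Longrightarrow> gaussian_weak_rv M a b (\<zeta> \<epsilon>)"
    and zeta_uncorr: "\<And>\<epsilon> u v. \<epsilon> > 0 \<Longrightarrow> u \<in> L2 a b \<Longrightarrow> v \<in> L2 a b \<Longrightarrow>
                  integral\<^sup>L M (\<lambda>\<omega>. \<xi> u \<omega> * \<zeta> \<epsilon> v \<omega>) = 0"
    and zeta_cov: "\<And>\<epsilon> u v. \<epsilon> > 0 \<Longrightarrow> u \<in> L2 a b \<Longrightarrow> v \<in> L2 a b \<Longrightarrow>
                  integral\<^sup>L M (\<lambda>\<omega>. \<zeta> \<epsilon> u \<omega> * \<zeta> \<epsilon> v \<omega>) = \<epsilon>\<^sup>2 * l2ip a b (N u) v"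
    and R_trace: "summable (\<lambda>k. l2ip a b (R (\<psi> k)) (\<psi> k))"
    and I_finite: "\<And>\<epsilon>. \<epsilon> > 0 \<Longrightarrow>
                  finite {k. lam k * sqrt (l2ip a b (R (\<psi> k)) (\<psi> k))
                             \<ge> \<epsilon> * sqrt (l2ip a b (N (\<psi> k)) (\<psi> k))}"
  shows "((\<lambda>\<epsilon>. mean_sq_norm M \<psi>
            (\<lambda>v \<omega>. \<xi> v \<omega>
               - (\<Sum>k\<in>{k. lam k * sqrt (l2ip a b (R (\<psi> k)) (\<psi> k))
                             \<ge> \<epsilon> * sqrt (l2ip a b (N (\<psi> k)) (\<psi> k))}.
                    (\<xi> (kernel_op (\<lambda>x y. K y x) a b (\<psi> k)) \<omega> + \<zeta> \<epsilon> (\<psi> k) \<omega>)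
                    * l2ip a b (\<psi> k) v / lam k)))
          \<longlongrightarrow> 0) (at_right 0)"
proof -
  have lam_pos: "0 < lam k" for k
    using lam_decr lam_lim by (rule strict_decreasing_tendsto_zero_pos)
  have \<rho>_nonneg: "0 \<le> l2ip a b (R (\<psi> k)) (\<psi> k)" for k
    unfolding R_cov[OF psi_L2 psi_L2] by (intro integral_nonneg_AE) simp
  have K_transpose: "(\<lambda>x y. K y x) = K"
    using K_sym by (intro ext) simp
  have \<xi>_A\<psi>: "AE \<omega> in M. \<xi> (kernel_op K a b (\<psi> k)) \<omega> = lam k * \<xi> (\<psi> k) \<omega>" for k
    by (rule gaussian_weak_rv_ae_eq_on_cmult[OF xi_gauss _
        kernel_op_measurable[OF K_meas L2_measurable[OF psi_L2]] psi_L2 psi_eigen]) (rule R_cov)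
  have lim: "((\<lambda>\<epsilon>. \<Sum>j. ennreal (min (\<epsilon>\<^sup>2 * (l2ip a b (N (\<psi> j)) (\<psi> j) / (lam j)\<^sup>2))
      (l2ip a b (R (\<psi> j)) (\<psi> j)))) \<longlongrightarrow> 0) (at_right 0)"
    by (intro tendsto_suminf_ennreal_min_sq divide_nonneg_nonneg less_imp_le[OF nu_pos] zero_le_power2
        \<rho>_nonneg R_trace)
  show ?thesis
    unfolding K_transpose
    apply (rule Lim_transform_eventually[OF lim eventually_mono[OF eventually_at_right_less]])
    subgoal premises \<epsilon>_pos for \<epsilon>
      unfolding mean_sq_norm_def sum_orthonormal_coeff[OF psi_orth I_finite[OF \<epsilon>_pos]] mem_Collect_eq
      using nn_integral_sq_cutoff_error[OF gaussian_weak_rv_square_integrable[OF xi_gauss psi_L2]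
          gaussian_weak_rv_square_integrable[OF zeta_gauss[OF \<epsilon>_pos] psi_L2] \<xi>_A\<psi> lam_pos
          R_cov[OF psi_L2 psi_L2, symmetric] zeta_cov[OF \<epsilon>_pos psi_L2 psi_L2]
          less_imp_le[OF nu_pos] less_imp_le[OF \<epsilon>_pos]]
      by simp
    done
qed

end
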